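(* Let $\mathbb{D}$ be a discrete polymatroid on ground set $\{1,\dots,r\}$ with rank function $\rho$ and $\rho(\{1,\dots,r\})=k$, and let $\mathcal{I}_{\mathbb{D}}(Z,\mathcal{R})$ be the generalized index coding problem constructed from $\mathbb{D}$ (defined in the context). If a perfect linear index coding solution of dimension $n$ over $\mathbb{F}_2$ exists for $\mathcal{I}_{\mathbb{D}}(Z,\mathcal{R})$, then the discrete polymatroid $n\mathbb{D}$ is representable over $\mathbb{F}_2$.
   Context: A discrete polymatroid on $\{1,\dots,r\}$ with rank function $\rho:2^{\{1,\dots,r\}}\to\mathbb{Z}_{\ge0}$ (monotone, submodular, $\rho(\emptyset)=0$) is the set $\mathbb{D}=\{u\in\mathbb{Z}_{\ge0}^r: \sum_{i\in A}u_i\le\rho(A)\ \forall A\subseteq\{1,\dots,r\}\}$. For $u,v\in\mathbb{Z}_{\ge0}^r$, $u\le v$ means componentwise and $u<v$ means $u\le v$, $u\ne v$; $(u)_{>0}$ is the set of indices of nonzero components. A basis vector of $\mathbb{D}$ is $u\in\mathbb{D}$ with no $v\in\mathbb{D}$, $u<v$; $\mathcal{B}(\mathbb{D})$ is the set of basis vectors. An excluded vector is $u\in\mathbb{Z}_{\ge0}^r$ with $u_i\le\rho(\{i\})$ for all $i$ and $u\notin\mathbb{D}$; it is minimal if no excluded $v$ satisfies $v<u$; $\mathcal{C}(\mathbb{D})$ is the set of minimal excluded vectors. $n\mathbb{D}$ is the discrete polymatroid on $\{1,\dots,r\}$ with rank function $n\rho$. It is representable over $\mathbb{F}_2$ if there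 are subspaces $V_1,\dots,V_r$ of an $\mathbb{F}_2$-vector space with $\dim(\sum_{i\in S}V_i)=n\rho(S)$ for all $S$. Construction of $\mathcal{I}_{\mathbb{D}}(Z,\mathcal{R})$: messages $Z=X\cup Y$ with $X=\{x_1,\dots,x_k\}$ and $Y=\{y_i^j: i\in\{1,\dots,r\}, j\in\{1,\dots,\rho(\{i\})\}\}$; with dimension $n$ each message lies in $\mathbb{F}_2^n$. Let $\zeta_i=\{y_i^1,\dots,y_i^{\rho(\{i\})}\}$. A receiver is a pair (demanded message, Has-set); a Has-set that is a set of messages means the receiver knows those messages, and a Has-set that is a sum $\sum_{y\in\Gamma}y$ means the receiver knows only the vector $\sum_{y\in\Gamma}y\in\mathbb{F}_2^n$. $\mathcal{R}=R_1\cup R_2\cup R_3$ where: $R_1=\bigcup_{b\in\mathcal{B}(\mathbb{D})}S_1(b)$ with $S_1(b)=\{(x_j,\bigcup_{l\in(b)_{>0}}\eta_l): j\in\{1,\dots,k\},\ \eta_l\subseteq\zeta_l,\ |\eta_l|=b_l\}$; $R_2=\bigcup_{c\in\mathcal{C}(\mathbb{D})}\bigcup_{j\in(c)_{>0}}\bigcup_{p\in\{1,\dots,\rho(\{j\})\}}S_2(c,j,p)$ with $S_2(c,j,p)=\{(y_j^p,\sum_{y\in\Gamma_1\cup\Gamma_2}y): \Gamma_1=\bigcup_{l\in(c)_{>0}\setminus\{j\}}\eta_l,\ \eta_l\subseteq\zeta_l,\ |\eta_l|=c_l,\ \Gamma_2\subseteq\zeta_j\setminus\{y_j^p\},\ |\Gamma_2|=c_j-1\}$;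 $R_3=\{(y_i^j,X): i\in\{1,\dots,r\}, j\in\{1,\dots,\rho(\{i\})\}\}$. An index code of length $l$ and dimension $n$ over $\mathbb{F}_2$ is a map $f$ from the concatenated messages in $\mathbb{F}_2^{n|Z|}$ to $\mathbb{F}_2^l$ such that each receiver can compute its demanded message from its Has-set and $f$ of the messages; it is linear if $f$ is linear. With $\mu$ the maximum number of receivers having the same Has-set, a solution is perfect if $l/n=\mu$. *)

theory Defs
  imports Complex_Main "HOL-Library.Z2" "HOL-Library.Function_Algebras"
begin

text \<open>Vectors in Z_{>=0}^r are functions nat => nat vanishing outside {1..r}.\<close>

definition nvecs :: "nat \<Rightarrow> (nat \<Rightarrow> nat) set" where
  "nvecs r = {u. \<forall>i. i \<notin> {1..r} \<longrightarrow> u i = 0}"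

definition is_rank_function :: "nat \<Rightarrow> (nat set \<Rightarrow> nat) \<Rightarrow> bool" where
  "is_rank_function r \<rho> \<longleftrightarrow>
     \<rho> {} = 0 \<and>
     (\<forall>A B. A \<subseteq> B \<and> B \<subseteq> {1..r} \<longrightarrow> \<rho> A \<le> \<rho> B) \<and>
     (\<forall>A B. A \<subseteq> {1..r} \<and> B \<subseteq> {1..r} \<longrightarrow> \<rho> (A \<union> B) + \<rho> (A \<inter> B) \<le> \<rho> A + \<rho> B)"

definition dpolymatroid :: "nat \<Rightarrow> (nat set \<Rightarrow> nat) \<Rightarrow> (nat \<Rightarrow> nat) set" where
  "dpolymatroid r \<rho> = {u \<in> nvecs r. \<forall>A. A \<subseteq> {1..r} \<longrightarrow> (\<Sum>i\<in>A. u i) \<le> \<rho> A}"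

definition supp :: "nat \<Rightarrow> (nat \<Rightarrow> nat) \<Rightarrow> nat set" where
  "supp r u = {i \<in> {1..r}. u i > 0}"

definition basis_vectors :: "nat \<Rightarrow> (nat set \<Rightarrow> nat) \<Rightarrow> (nat \<Rightarrow> nat) set" where
  "basis_vectors r \<rho> = {u \<in> dpolymatroid r \<rho>. \<not> (\<exists>v \<in> dpolymatroid r \<rho>. u \<le> v \<and> u \<noteq> v)}"

definition excluded_vectors :: "nat \<Rightarrow> (nat set \<Rightarrow> nat) \<Rightarrow> (nat \<Rightarrow> nat) set" where
  "excluded_vectors r \<rho> = {u \<in> nvecs r. (\<forall>i \<in> {1..r}. u i \<le> \<rho> {i}) \<and> u \<notin> dpolymatroid r \<rho>}"

definition min_excluded_vectors :: "nat \<Rightarrow> (nat set \<Rightarrow> nat) \<Rightarrow> (nat \<Rightarrow> nat) set" where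
  "min_excluded_vectors r \<rho> =
     {u \<in> excluded_vectors r \<rho>. \<not> (\<exists>v \<in> excluded_vectors r \<rho>. v \<le> u \<and> v \<noteq> u)}"

definition bvecs :: "nat \<Rightarrow> (nat \<Rightarrow> bit) set" where
  "bvecs N = {v. \<forall>t. t \<ge> N \<longrightarrow> v t = 0}"

definition bscale :: "bit \<Rightarrow> (nat \<Rightarrow> bit) \<Rightarrow> (nat \<Rightarrow> bit)" where
  "bscale c v = (\<lambda>t. c * v t)"

interpretation fv: vector_space bscale
  by unfold_locales (auto simp: bscale_def fun_eq_iff algebra_simps)

text \<open>The dimension of the sum of
  subspaces is the dimension of the span of their union.\<close>

definition representable_F2 :: "nat \<Rightarrow> (nat set \<Rightarrow> nat) \<Rightarrow> bool" where
  "representable_F2 r \<rho>' \<longleftrightarrow>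
     (\<exists>N (V :: nat \<Rightarrow> (nat \<Rightarrow> bit) set).
        (\<forall>i \<in> {1..r}. fv.subspace (V i) \<and> V i \<subseteq> bvecs N) \<and>
        (\<forall>S. S \<subseteq> {1..r} \<longrightarrow> fv.dim (\<Union>i\<in>S. V i) = \<rho>' S))"

datatype msg = Xmsg nat | Ymsg nat nat

datatype hasset = Knows "msg set" | KnowsSum "msg set"

type_synonym receiver = "msg \<times> hasset"

definition Xset :: "nat \<Rightarrow> msg set" where
  "Xset k = {Xmsg j | j. j \<in> {1..k}}"

definition zeta :: "(nat set \<Rightarrow> nat) \<Rightarrow> nat \<Rightarrow> msg set" where
  "zeta \<rho> i = {Ymsg i j | j. j \<in> {1..\<rho> {i}}}"

definition Yset :: "nat \<Rightarrow> (nat set \<Rightarrow> nat) \<Rightarrow> msg set" where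
  "Yset r \<rho> = (\<Union>i\<in>{1..r}. zeta \<rho> i)"

definition Zset :: "nat \<Rightarrow> (nat set \<Rightarrow> nat) \<Rightarrow> msg set" where
  "Zset r \<rho> = Xset (\<rho> {1..r}) \<union> Yset r \<rho>"

definition S1 :: "nat \<Rightarrow> (nat set \<Rightarrow> nat) \<Rightarrow> (nat \<Rightarrow> nat) \<Rightarrow> receiver set" where
  "S1 r \<rho> b = {(Xmsg j, Knows (\<Union>l\<in>supp r b. \<eta> l)) | j \<eta>.
      j \<in> {1..\<rho> {1..r}} \<and> (\<forall>l \<in> supp r b. \<eta> l \<subseteq> zeta \<rho> l \<and> card (\<eta> l) = b l)}"

definition R1 :: "nat \<Rightarrow> (nat set \<Rightarrow> nat) \<Rightarrow> receiver set" where
  "R1 r \<rho> = (\<Union>b \<in> basis_vectors r \<rho>. S1 r \<rho> b)"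

definition S2 :: "nat \<Rightarrow> (nat set \<Rightarrow> nat) \<Rightarrow> (nat \<Rightarrow> nat) \<Rightarrow> nat \<Rightarrow> nat \<Rightarrow> receiver set" where
  "S2 r \<rho> c j p = {(Ymsg j p, KnowsSum ((\<Union>l\<in>supp r c - {j}. \<eta> l) \<union> \<Gamma>2)) | \<eta> \<Gamma>2.
      (\<forall>l \<in> supp r c - {j}. \<eta> l \<subseteq> zeta \<rho> l \<and> card (\<eta> l) = c l) \<and>
      \<Gamma>2 \<subseteq> zeta \<rho> j - {Ymsg j p} \<and> card \<Gamma>2 = c j - 1}"

definition R2 :: "nat \<Rightarrow> (nat set \<Rightarrow> nat) \<Rightarrow> receiver set" where
  "R2 r \<rho> = (\<Union>c \<in> min_excluded_vectors r \<rho>. \<Union>j \<in> supp r c. \<Union>p \<in> {1..\<rho> {j}}. S2 r \<rho> c j p)"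

definition R3 :: "nat \<Rightarrow> (nat set \<Rightarrow> nat) \<Rightarrow> receiver set" where
  "R3 r \<rho> = {(Ymsg i j, Knows (Xset (\<rho> {1..r}))) | i j. i \<in> {1..r} \<and> j \<in> {1..\<rho> {i}}}"

definition Rset :: "nat \<Rightarrow> (nat set \<Rightarrow> nat) \<Rightarrow> receiver set" where
  "Rset r \<rho> = R1 r \<rho> \<union> R2 r \<rho> \<union> R3 r \<rho>"

definition mu :: "receiver set \<Rightarrow> nat" where
  "mu R = Max {card {q \<in> R. snd q = h} | h. h \<in> snd ` R}"

text \<open>A message assignment of dimension n: each message of Z gets a vector in F_2^n
  (messages outside Z are 0); these are exactly the elements of F_2^{n|Z|}.\<close>

definition assignments :: "nat \<Rightarrow> msg set \<Rightarrow> (msg \<Rightarrow> nat \<Rightarrow> bit) set" where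
  "assignments n Z = {m. (\<forall>z \<in> Z. m z \<in> bvecs n) \<and> (\<forall>z. z \<notin> Z \<longrightarrow> m z = 0)}"

fun side_info :: "hasset \<Rightarrow> (msg \<Rightarrow> nat \<Rightarrow> bit) \<Rightarrow> (msg \<Rightarrow> nat \<Rightarrow> bit)" where
  "side_info (Knows S) m = (\<lambda>z. if z \<in> S then m z else 0)"
| "side_info (KnowsSum \<Gamma>) m = (\<lambda>_. \<Sum>y\<in>\<Gamma>. m y)"

definition is_index_code ::
  "nat \<Rightarrow> msg set \<Rightarrow> receiver set \<Rightarrow> nat \<Rightarrow> ((msg \<Rightarrow> nat \<Rightarrow> bit) \<Rightarrow> (nat \<Rightarrow> bit)) \<Rightarrow> bool" where
  "is_index_code n Z R l f \<longleftrightarrow>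
     (\<forall>m \<in> assignments n Z. f m \<in> bvecs l) \<and>
     (\<forall>(d, h) \<in> R. \<exists>g. \<forall>m \<in> assignments n Z. g (side_info h m) (f m) = m d)"

definition is_linear_code :: "nat \<Rightarrow> msg set \<Rightarrow> ((msg \<Rightarrow> nat \<Rightarrow> bit) \<Rightarrow> (nat \<Rightarrow> bit)) \<Rightarrow> bool" where
  "is_linear_code n Z f \<longleftrightarrow>
     (\<forall>m1 \<in> assignments n Z. \<forall>m2 \<in> assignments n Z. f (m1 + m2) = f m1 + f m2) \<and>
     (\<forall>c. \<forall>m \<in> assignments n Z. f (\<lambda>z. bscale c (m z)) = bscale c (f m))"

definition has_perfect_linear_solution :: "nat \<Rightarrow> msg set \<Rightarrow> receiver set \<Rightarrow> bool" where
  "has_perfect_linear_solution n Z R \<longleftrightarrow>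
     (\<exists>l f. is_index_code n Z R l f \<and> is_linear_code n Z f \<and>
            real l / real n = real (mu R))"

end

theory Submission
  imports Defs
begin

text \<open>Let \<open>K\<close> be the kernel of the linear code \<open>f\<close> on the message assignments. The receivers in
  \<open>R_3\<close> force an element of \<open>K\<close> with vanishing \<open>X\<close>-part to vanish, so \<open>f\<close> is injective on the
  assignments supported on \<open>Y\<close>; perfectness gives \<open>l \<le> n |Y|\<close>, hence \<open>f\<close> maps them onto \<open>F_2^l\<close>.
  Consequently every \<open>X\<close>-part \<open>x \<in> F_2^{kn}\<close> extends to an element of \<open>K\<close> whose \<open>(y, s)\<close>-entry is
  the inner product of \<open>x\<close> with a fixed vector \<open>row y s\<close>. A receiver that decodes a message from
  some side information then says, by duality over \<open>F_2\<close>, that the row of the decoded entry lies in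
  the span of the rows of the side information. With \<open>V_i\<close> spanned by the rows of \<open>\<zeta>_i\<close>: the
  receivers in \<open>R_1\<close> show that the \<open>kn\<close> rows of a basis vector span \<open>F_2^{kn}\<close>, so they are
  independent, and the receivers in \<open>R_2\<close> show that for a basis vector \<open>b\<close> tight on \<open>S\<close> the
  \<open>n \<rho>(S)\<close> rows of \<open>\<eta>_S\<close> span every \<open>V_i\<close>, \<open>i \<in> S\<close>. Hence \<open>dim (\<Sum>_{i\<in>S} V_i) = n \<rho>(S)\<close>.\<close>

section \<open>Discrete polymatroids\<close>

lemma rank_function_mono:
  "is_rank_function r \<rho> \<Longrightarrow> A \<subseteq> B \<Longrightarrow> B \<subseteq> {1..r} \<Longrightarrow> \<rho> A \<le> \<rho> B"
  unfolding is_rank_function_def by blast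

lemma rank_function_submod:
  "is_rank_function r \<rho> \<Longrightarrow> A \<subseteq> {1..r} \<Longrightarrow> B \<subseteq> {1..r} \<Longrightarrow>
   \<rho> (A \<union> B) + \<rho> (A \<inter> B) \<le> \<rho> A + \<rho> B"
  unfolding is_rank_function_def by blast

lemma rank_function_empty: "is_rank_function r \<rho> \<Longrightarrow> \<rho> {} = 0"
  unfolding is_rank_function_def by blast

lemma nvecs_zero: "u \<in> nvecs r \<Longrightarrow> i \<notin> {1..r} \<Longrightarrow> u i = 0"
  unfolding nvecs_def by blast

lemma dpolymatroidI:
  "u \<in> nvecs r \<Longrightarrow> (\<And>A. A \<subseteq> {1..r} \<Longrightarrow> (\<Sum>i\<in>A. u i) \<le> \<rho> A) \<Longrightarrow> u \<in> dpolymatroid r \<rho>"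
  unfolding dpolymatroid_def by blast

lemma dpolymatroidD: "u \<in> dpolymatroid r \<rho> \<Longrightarrow> A \<subseteq> {1..r} \<Longrightarrow> (\<Sum>i\<in>A. u i) \<le> \<rho> A"
  unfolding dpolymatroid_def by blast

lemma dpolymatroid_nvecs: "u \<in> dpolymatroid r \<rho> \<Longrightarrow> u \<in> nvecs r"
  unfolding dpolymatroid_def by blast

lemma dpolymatroid_le_rank_singleton:
  "u \<in> dpolymatroid r \<rho> \<Longrightarrow> i \<in> {1..r} \<Longrightarrow> u i \<le> \<rho> {i}"
  using dpolymatroidD[of u r \<rho> "{i}"] by auto

lemma dpolymatroid_downward_closed:
  assumes u: "u \<in> dpolymatroid r \<rho>" and c: "c \<in> nvecs r" and le: "\<And>i. i \<in> {1..r} \<Longrightarrow> c i \<le> u i"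
  shows "c \<in> dpolymatroid r \<rho>"
proof (rule dpolymatroidI[OF c])
  fix A assume A: "A \<subseteq> {1..r}"
  have "(\<Sum>i\<in>A. c i) \<le> (\<Sum>i\<in>A. u i)" using le A by (intro sum_mono) auto
  then show "(\<Sum>i\<in>A. c i) \<le> \<rho> A" using dpolymatroidD[OF u A] by simp
qed

lemma sum_less_if_less_nvecs:
  assumes "u \<in> nvecs r" "v \<in> nvecs r" "u \<le> v" "u \<noteq> v"
  shows "(\<Sum>i\<in>{1..r}. u i) < (\<Sum>i\<in>{1..r}. v i)"
proof -
  obtain i where i: "u i \<noteq> v i" using assms(4) by (auto simp: fun_eq_iff)
  then have "i \<in> {1..r}" using assms(1,2) nvecs_zero by metis
  then show ?thesis
    using assms(3) i by (intro sum_strict_mono_ex1) (auto simp: le_fun_def order.strict_iff_order)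
qed

lemma dpolymatroid_extend_tight:
  assumes rank: "is_rank_function r \<rho>" and u: "u \<in> dpolymatroid r \<rho>"
    and supp_u: "\<And>i. i \<notin> P \<Longrightarrow> u i = 0" and P: "P \<subseteq> {1..r}"
    and tight: "(\<Sum>i\<in>P. u i) = \<rho> P" and x: "x \<in> {1..r}" "x \<notin> P"
  defines "u' \<equiv> u(x := \<rho> (insert x P) - \<rho> P)"
  shows "u' \<in> dpolymatroid r \<rho>" and "(\<Sum>i\<in>insert x P. u' i) = \<rho> (insert x P)"
proof -
  have finP: "finite P" using P finite_subset by blast
  have mono: "\<rho> P \<le> \<rho> (insert x P)" using rank_function_mono[OF rank, of P "insert x P"] P x by auto
  show "u' \<in> dpolymatroid r \<rho>"
  proof (rule dpolymatroidI)
    show "u' \<in> nvecs r" using dpolymatroid_nvecs[OF u] x unfolding nvecs_def u'_def by auto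
  next
    fix A assume A: "A \<subseteq> {1..r}"
    have finA: "finite A" using A finite_subset by blast
    show "(\<Sum>i\<in>A. u' i) \<le> \<rho> A"
    proof (cases "x \<in> A")
      case False
      then have "(\<Sum>i\<in>A. u' i) = (\<Sum>i\<in>A. u i)" unfolding u'_def by (intro sum.cong) auto
      then show ?thesis using dpolymatroidD[OF u A] by simp
    next
      case True
      have "(\<Sum>i\<in>A. u' i) = u' x + (\<Sum>i\<in>A - {x}. u i)"
        using True finA by (simp add: sum.remove u'_def)
      also have "(\<Sum>i\<in>A - {x}. u i) = (\<Sum>i\<in>A \<inter> P. u i)"
        using finA x supp_u by (intro sum.mono_neutral_cong_right) auto
      also have "\<dots> \<le> \<rho> (A \<inter> P)" using dpolymatroidD[OF u, of "A \<inter> P"] A by auto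
      finally have "(\<Sum>i\<in>A. u' i) \<le> \<rho> (insert x P) - \<rho> P + \<rho> (A \<inter> P)"
        unfolding u'_def by simp
      moreover have "\<rho> (insert x P) + \<rho> (A \<inter> P) \<le> \<rho> (insert x (A \<inter> P)) + \<rho> P"
      proof -
        have "insert x (A \<inter> P) \<union> P = insert x P" "insert x (A \<inter> P) \<inter> P = A \<inter> P" using x by auto
        then show ?thesis using rank_function_submod[OF rank, of "insert x (A \<inter> P)" P] A P x by auto
      qed
      moreover have "\<rho> (insert x (A \<inter> P)) \<le> \<rho> A"
        using rank_function_mono[OF rank, of "insert x (A \<inter> P)" A] A True by auto
      ultimately show ?thesis using mono by linarith
    qed
  qed
  have "(\<Sum>i\<in>insert x P. u' i) = u' x + (\<Sum>i\<in>P. u' i)" using finP x by simp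
  also have "(\<Sum>i\<in>P. u' i) = (\<Sum>i\<in>P. u i)" unfolding u'_def using x by (intro sum.cong) auto
  finally show "(\<Sum>i\<in>insert x P. u' i) = \<rho> (insert x P)" using tight mono unfolding u'_def by simp
qed

lemma dpolymatroid_extend_tight_set:
  assumes rank: "is_rank_function r \<rho>" and "finite Q"
  shows "u \<in> dpolymatroid r \<rho> \<Longrightarrow> (\<And>i. i \<notin> P \<Longrightarrow> u i = 0) \<Longrightarrow> P \<union> Q \<subseteq> {1..r} \<Longrightarrow> P \<inter> Q = {}
    \<Longrightarrow> (\<Sum>i\<in>P. u i) = \<rho> P \<Longrightarrow>
    \<exists>u'. u' \<in> dpolymatroid r \<rho> \<and> (\<forall>i. i \<notin> P \<union> Q \<longrightarrow> u' i = 0) \<and> (\<forall>i\<in>P. u' i = u i)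
       \<and> (\<Sum>i\<in>P \<union> Q. u' i) = \<rho> (P \<union> Q)"
  using \<open>finite Q\<close>
proof (induction Q)
  case empty
  then show ?case by auto
next
  case (insert x Q)
  obtain u1 where u1: "u1 \<in> dpolymatroid r \<rho>" "\<forall>i. i \<notin> P \<union> Q \<longrightarrow> u1 i = 0" "\<forall>i\<in>P. u1 i = u i"
     "(\<Sum>i\<in>P \<union> Q. u1 i) = \<rho> (P \<union> Q)"
    using insert by auto
  have x: "x \<in> {1..r}" "x \<notin> P \<union> Q" and PQ: "P \<union> Q \<subseteq> {1..r}" using insert by auto
  note step = dpolymatroid_extend_tight[OF rank u1(1) _ PQ u1(4) x]
  let ?u = "u1(x := \<rho> (insert x (P \<union> Q)) - \<rho> (P \<union> Q))"
  have "?u \<in> dpolymatroid r \<rho>" using step(1) u1(2) by blast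
  moreover have "\<forall>i. i \<notin> P \<union> insert x Q \<longrightarrow> ?u i = 0" using u1(2) by auto
  moreover have "\<forall>i\<in>P. ?u i = u i" using u1(3) x by auto
  moreover have "(\<Sum>i\<in>P \<union> insert x Q. ?u i) = \<rho> (P \<union> insert x Q)" using step(2) u1(2) by simp
  ultimately show ?case by blast
qed

lemma ex_dpolymatroid_tight:
  assumes rank: "is_rank_function r \<rho>" and S: "S \<subseteq> {1..r}"
  shows "\<exists>b \<in> dpolymatroid r \<rho>. (\<Sum>i\<in>S. b i) = \<rho> S \<and> (\<Sum>i\<in>{1..r}. b i) = \<rho> {1..r}"
proof -
  have zero: "(\<lambda>_. 0::nat) \<in> dpolymatroid r \<rho>" unfolding dpolymatroid_def nvecs_def by auto
  obtain u where u: "u \<in> dpolymatroid r \<rho>" "\<forall>i. i \<notin> S \<longrightarrow> u i = 0" "(\<Sum>i\<in>S. u i) = \<rho> S"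
    using dpolymatroid_extend_tight_set[OF rank, of S "\<lambda>_. 0" "{}"] zero S finite_subset[OF S]
      rank_function_empty[OF rank] by auto
  obtain b where b: "b \<in> dpolymatroid r \<rho>" "\<forall>i\<in>S. b i = u i"
      "(\<Sum>i\<in>S \<union> ({1..r} - S). b i) = \<rho> (S \<union> ({1..r} - S))"
    using dpolymatroid_extend_tight_set[OF rank, of "{1..r} - S" u S] u S by auto
  have "S \<union> ({1..r} - S) = {1..r}" using S by auto
  then show ?thesis using b u by (intro bexI[of _ b]) auto
qed

lemma basis_vectorI:
  assumes b: "b \<in> dpolymatroid r \<rho>" and "(\<Sum>i\<in>{1..r}. b i) = \<rho> {1..r}"
  shows "b \<in> basis_vectors r \<rho>"
proof -
  have False if v: "v \<in> dpolymatroid r \<rho>" "b \<le> v" "b \<noteq> v" for v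
    using sum_less_if_less_nvecs[OF dpolymatroid_nvecs[OF b] dpolymatroid_nvecs[OF v(1)] v(2,3)]
      dpolymatroidD[OF v(1), of "{1..r}"] assms(2) by simp
  then show ?thesis unfolding basis_vectors_def using b by auto
qed

lemma ex_min_excluded_vector_le:
  "w \<in> excluded_vectors r \<rho> \<Longrightarrow> \<exists>c \<in> min_excluded_vectors r \<rho>. c \<le> w"
proof (induction "\<Sum>i\<in>{1..r}. w i" arbitrary: w rule: less_induct)
  case less
  show ?case
  proof (cases "w \<in> min_excluded_vectors r \<rho>")
    case False
    then obtain v where v: "v \<in> excluded_vectors r \<rho>" "v \<le> w" "v \<noteq> w"
      using less.prems unfolding min_excluded_vectors_def by auto
    have "(\<Sum>i\<in>{1..r}. v i) < (\<Sum>i\<in>{1..r}. w i)"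
      using v less.prems by (intro sum_less_if_less_nvecs) (auto simp: excluded_vectors_def)
    with less.hyps v(1) obtain c where "c \<in> min_excluded_vectors r \<rho>" "c \<le> v" by blast
    then show ?thesis using v(2) order_trans by blast
  qed auto
qed

text \<open>Raising \<open>b j\<close> leaves the polymatroid because \<open>b\<close> is tight on \<open>S\<close>; a minimal excluded vector
  below the raised vector must use the raised coordinate.\<close>

lemma ex_min_excluded_vector_raising:
  assumes b: "b \<in> dpolymatroid r \<rho>" and S: "S \<subseteq> {1..r}" and tight: "(\<Sum>i\<in>S. b i) = \<rho> S"
    and j: "j \<in> S" and bj: "b j < \<rho> {j}"
  shows "\<exists>c \<in> min_excluded_vectors r \<rho>. c j = b j + 1 \<and> supp r c \<subseteq> S \<and> (\<forall>i\<in>S - {j}. c i \<le> b i)"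
proof -
  define u where "u i = (if i \<in> S then b i else 0)" for i
  define w where "w = u(j := b j + 1)"
  have jr: "j \<in> {1..r}" and finS: "finite S" using j S finite_subset by auto
  have u_nvecs: "u \<in> nvecs r" unfolding nvecs_def u_def using S by auto
  have u_dp: "u \<in> dpolymatroid r \<rho>"
    using dpolymatroid_downward_closed[OF b u_nvecs] unfolding u_def by auto
  have "(\<Sum>i\<in>S. w i) = w j + (\<Sum>i\<in>S - {j}. b i)"
    using finS j unfolding w_def u_def by (simp add: sum.remove)
  also have "\<dots> = (\<Sum>i\<in>S. b i) + 1" using finS j unfolding w_def by (simp add: sum.remove)
  finally have "w \<notin> dpolymatroid r \<rho>" using tight dpolymatroidD[OF _ S, of w \<rho>] by linarith
  moreover have "w \<in> nvecs r" unfolding nvecs_def w_def u_def using S jr by auto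
  moreover have "\<forall>i\<in>{1..r}. w i \<le> \<rho> {i}"
    unfolding w_def u_def using dpolymatroid_le_rank_singleton[OF b] bj by auto
  ultimately have "w \<in> excluded_vectors r \<rho>" unfolding excluded_vectors_def by blast
  then obtain c where c: "c \<in> min_excluded_vectors r \<rho>" "c \<le> w"
    using ex_min_excluded_vector_le by blast
  have c_nvecs: "c \<in> nvecs r" and c_notin: "c \<notin> dpolymatroid r \<rho>"
    using c(1) unfolding min_excluded_vectors_def excluded_vectors_def by auto
  have cw: "c i \<le> w i" for i using c(2) by (simp add: le_fun_def)
  have "c j = b j + 1"
  proof (rule ccontr)
    assume "c j \<noteq> b j + 1"
    then have "c i \<le> u i" if "i \<in> {1..r}" for i
      using cw[of i] cw[of j] j unfolding w_def u_def by (cases "i = j") auto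
    then have "c \<in> dpolymatroid r \<rho>" by (rule dpolymatroid_downward_closed[OF u_dp c_nvecs])
    then show False using c_notin by contradiction
  qed
  moreover have "supp r c \<subseteq> S"
    using cw j unfolding supp_def w_def u_def by (force split: if_splits)
  moreover have "\<forall>i\<in>S - {j}. c i \<le> b i"
  proof
    fix i assume "i \<in> S - {j}"
    then show "c i \<le> b i" using cw[of i] unfolding w_def u_def by simp
  qed
  ultimately show ?thesis using c(1) by blast
qed

section \<open>Linear algebra over \<open>F_2\<close>\<close>

context vector_space
begin

lemma subset_span_if_independent_card_ge:
  assumes "B \<subseteq> V" "V \<subseteq> span W" "finite W" "independent B" "card W \<le> card B"
  shows "V \<subseteq> span B"
proof
  fix a assume "a \<in> V"
  show "a \<in> span B"
  proof (rule ccontr)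
    assume a: "a \<notin> span B"
    then have "independent (insert a B)" "a \<notin> B"
      using assms(4) by (auto simp: independent_insert span_base)
    moreover have "insert a B \<subseteq> span W" using assms(1,2) \<open>a \<in> V\<close> by auto
    ultimately have "card (insert a B) \<le> card W"
      using independent_span_bound[OF assms(3)] by auto
    moreover have "finite B" using independent_span_bound[OF assms(3,4)] assms(1,2) by auto
    ultimately show False using assms(5) \<open>a \<notin> B\<close> by simp
  qed
qed

lemma independent_if_card_le_independent_in_span:
  assumes fin: "finite B" and E: "independent E" "E \<subseteq> span B" and card: "card B \<le> card E"
  shows "independent B"
proof
  assume "dependent B"
  then obtain a where a: "a \<in> B" "a \<in> span (B - {a})" by (meson dependent_def)
  have "B \<subseteq> span (B - {a})" using a(2) by (auto intro: span_base)
  then have "span B \<subseteq> span (B - {a})" using span_minimal subspace_span by blast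
  then have "card E \<le> card (B - {a})"
    using independent_span_bound[OF _ E(1)] fin E(2) by (meson finite_Diff order_trans)
  moreover have "card (B - {a}) < card B" by (rule card_Diff1_less[OF fin a(1)])
  ultimately show False using card by simp
qed

end

declare add_bit_eq_xor [simp del] mult_bit_eq_and [simp del]

lemma bit_add_self [simp]: "(a::bit) + a = 0"
  by (cases a) auto

lemma fun_bit_add_self [simp]: "(v::'a \<Rightarrow> bit) + v = 0"
  by (simp add: fun_eq_iff)

lemma bit_cases: "(a::bit) = 0 \<or> a = 1"
  by (cases a) auto

lemma sum_apply: "(\<Sum>i\<in>I. F i) x = (\<Sum>i\<in>I. F i x)"
  by (induction I rule: infinite_finite_induct) auto

definition unit_vec :: "nat \<Rightarrow> nat \<Rightarrow> bit" where
  "unit_vec i = (\<lambda>t. if t = i then 1 else 0)"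

lemma inj_unit_vec: "inj unit_vec"
  by (rule injI) (metis unit_vec_def zero_neq_one)

lemma independent_unit_vecs: "finite I \<Longrightarrow> fv.independent (unit_vec ` I)"
proof (rule fv.independent_if_scalars_zero)
  fix g :: "(nat \<Rightarrow> bit) \<Rightarrow> bit" and v
  assume "finite I" and zero: "(\<Sum>v\<in>unit_vec ` I. bscale (g v) v) = 0" and "v \<in> unit_vec ` I"
  then obtain i where i: "i \<in> I" "v = unit_vec i" by blast
  have "(\<Sum>v\<in>unit_vec ` I. bscale (g v) v) i = (\<Sum>i'\<in>I. bscale (g (unit_vec i')) (unit_vec i') i)"
    by (simp add: sum.reindex[OF inj_on_subset[OF inj_unit_vec]] sum_apply)
  also have "\<dots> = g v"
    using \<open>finite I\<close> i by (simp add: bscale_def unit_vec_def if_distrib cong: if_cong)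
  finally show "g v = 0" using zero by simp
qed simp

lemma bvecs_subset_span_unit_vecs: "bvecs N \<subseteq> fv.span (unit_vec ` {..<N})"
proof
  fix v assume v: "v \<in> bvecs N"
  have "v = (\<Sum>i<N. bscale (v i) (unit_vec i))"
    using v
    by (auto simp: fun_eq_iff sum_apply bscale_def unit_vec_def bvecs_def if_distrib cong: if_cong)
  also have "\<dots> \<in> fv.span (unit_vec ` {..<N})"
    by (intro fv.span_sum fv.span_scale fv.span_base) auto
  finally show "v \<in> fv.span (unit_vec ` {..<N})" .
qed

lemma subspace_bvecs: "fv.subspace (bvecs N)"
  unfolding fv.subspace_def bvecs_def bscale_def by auto

definition supported_on :: "nat set \<Rightarrow> (nat \<Rightarrow> bit) set" where
  "supported_on I = {w. \<forall>i. i \<notin> I \<longrightarrow> w i = 0}"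

definition bdot :: "nat set \<Rightarrow> (nat \<Rightarrow> bit) \<Rightarrow> (nat \<Rightarrow> bit) \<Rightarrow> bit" where
  "bdot I w x = (\<Sum>i\<in>I. w i * x i)"

lemma bdot_add_left: "bdot I (v + w) x = bdot I v x + bdot I w x"
  unfolding bdot_def by (simp add: distrib_right sum.distrib)

lemma bdot_add_right: "bdot I w (x + y) = bdot I w x + bdot I w y"
  unfolding bdot_def by (simp add: distrib_left sum.distrib)

lemma bdot_sum_left: "bdot I (\<Sum>z\<in>G. F z) x = (\<Sum>z\<in>G. bdot I (F z) x)"
  unfolding bdot_def sum_apply by (simp add: sum_distrib_right) (rule sum.swap)

lemma bdot_unit_vec_left:
  assumes "finite I" "i \<in> I" shows "bdot I (unit_vec i) x = x i"
proof -
  have "bdot I (unit_vec i) x = (\<Sum>t\<in>I. if t = i then x t else 0)"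
    unfolding bdot_def unit_vec_def by (intro sum.cong) auto
  then show ?thesis using assms by simp
qed

lemma bdot_unit_vec_right:
  assumes "finite I" "i \<in> I" shows "bdot I w (unit_vec i) = w i"
proof -
  have "bdot I w (unit_vec i) = (\<Sum>t\<in>I. if t = i then w t else 0)"
    unfolding bdot_def unit_vec_def by (intro sum.cong) auto
  then show ?thesis using assms by simp
qed

text \<open>Induction on \<open>\<Phi>\<close>: a point separating \<open>\<psi>\<close> from \<open>\<Phi>\<close> either is orthogonal to the new
  vector \<open>\<phi>\<close>, or can be corrected by adding a point separating \<open>\<psi> + \<phi>\<close> from \<open>\<Phi>\<close>.\<close>

lemma ex_bdot_separating:
  assumes I: "finite I"
  shows "finite \<Phi> \<Longrightarrow> \<Phi> \<subseteq> supported_on I \<Longrightarrow> \<psi> \<in> supported_on I \<Longrightarrow> \<psi> \<notin> fv.span \<Phi> \<Longrightarrow>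
    \<exists>x. (\<forall>\<phi>\<in>\<Phi>. bdot I \<phi> x = 0) \<and> bdot I \<psi> x = 1"
proof (induction \<Phi> arbitrary: \<psi> rule: finite_induct)
  case empty
  have "\<psi> \<noteq> 0" using empty.prems(3) fv.span_zero by metis
  then obtain i where i: "\<psi> i = 1" using bit_cases by (metis ext zero_fun_apply)
  then have "i \<in> I" using empty.prems(2) by (auto simp: supported_on_def)
  then show ?case using i bdot_unit_vec_right[OF I] by (intro exI[of _ "unit_vec i"]) simp
next
  case (insert \<phi> \<Phi>)
  have span_le: "fv.span \<Phi> \<subseteq> fv.span (insert \<phi> \<Phi>)" by (rule fv.span_mono) auto
  have \<Phi>_supp: "\<Phi> \<subseteq> supported_on I" using insert.prems(1) by simp
  have "\<psi> \<notin> fv.span \<Phi>" using insert.prems(3) span_le by blast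
  then obtain x1 where x1: "\<forall>\<phi>\<in>\<Phi>. bdot I \<phi> x1 = 0" "bdot I \<psi> x1 = 1"
    using insert.IH[OF \<Phi>_supp insert.prems(2)] by blast
  show ?case
  proof (cases "bdot I \<phi> x1 = 0")
    case True
    then show ?thesis using x1 by auto
  next
    case False
    then have \<phi>x1: "bdot I \<phi> x1 = 1" using bit_cases by auto
    have notin: "\<psi> + \<phi> \<notin> fv.span \<Phi>"
    proof
      assume "\<psi> + \<phi> \<in> fv.span \<Phi>"
      then have "\<psi> + \<phi> \<in> fv.span (insert \<phi> \<Phi>)" using span_le by blast
      then have "(\<psi> + \<phi>) + \<phi> \<in> fv.span (insert \<phi> \<Phi>)"
        by (rule fv.span_add) (simp add: fv.span_base)
      moreover have "(\<psi> + \<phi>) + \<phi> = \<psi>" by (simp add: fun_eq_iff add.assoc)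
      ultimately show False using insert.prems(3) by simp
    qed
    have "\<psi> + \<phi> \<in> supported_on I" using insert.prems(1,2) by (auto simp: supported_on_def)
    then obtain x2 where x2: "\<forall>\<phi>\<in>\<Phi>. bdot I \<phi> x2 = 0" "bdot I (\<psi> + \<phi>) x2 = 1"
      using insert.IH[OF \<Phi>_supp _ notin] by blast
    show ?thesis
    proof (cases "bdot I \<phi> x2 = 0")
      case True
      then show ?thesis using x2 by (intro exI[of _ x2]) (simp add: bdot_add_left)
    next
      case False
      then have "bdot I \<phi> x2 = 1" "bdot I \<psi> x2 = 0"
        using x2(2)[unfolded bdot_add_left] bit_cases by auto
      then have "\<forall>\<phi>'\<in>insert \<phi> \<Phi>. bdot I \<phi>' (x1 + x2) = 0" "bdot I \<psi> (x1 + x2) = 1"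
        unfolding bdot_add_right using x1 x2(1) \<phi>x1 by auto
      then show ?thesis by blast
    qed
  qed
qed

lemma in_span_if_bdot_annihilated:
  assumes "finite I" "finite \<Phi>" "\<Phi> \<subseteq> supported_on I" "\<psi> \<in> supported_on I"
    and annihilated: "\<And>x. \<forall>\<phi>\<in>\<Phi>. bdot I \<phi> x = 0 \<Longrightarrow> bdot I \<psi> x = 0"
  shows "\<psi> \<in> fv.span \<Phi>"
proof (rule ccontr)
  assume "\<psi> \<notin> fv.span \<Phi>"
  then obtain x where "\<forall>\<phi>\<in>\<Phi>. bdot I \<phi> x = 0" "bdot I \<psi> x = 1"
    using ex_bdot_separating[OF assms(1-4)] by blast
  then show False using annihilated by simp
qed

section \<open>The receivers of the index coding problem\<close>

lemma Xmsg_in_Zset: "Xmsg j \<in> Zset r \<rho> \<longleftrightarrow> j \<in> {1..\<rho> {1..r}}"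
  unfolding Zset_def Xset_def Yset_def zeta_def by auto

lemma Ymsg_in_Yset: "Ymsg i j \<in> Yset r \<rho> \<longleftrightarrow> i \<in> {1..r} \<and> j \<in> {1..\<rho> {i}}"
  unfolding Yset_def zeta_def by auto

lemma Xmsg_notin_Yset: "Xmsg j \<notin> Yset r \<rho>"
  unfolding Yset_def zeta_def by auto

lemma Yset_subset_Zset: "Yset r \<rho> \<subseteq> Zset r \<rho>"
  unfolding Zset_def by auto

lemma finite_Yset: "finite (Yset r \<rho>)"
  unfolding Yset_def zeta_def by auto

lemma card_Xset: "card (Xset k) = k"
proof -
  have "Xset k = Xmsg ` {1..k}" unfolding Xset_def by auto
  then show ?thesis by (simp add: card_image inj_on_def)
qed

text \<open>The messages \<open>y_l^q\<close>, \<open>l \<in> S\<close>, \<open>q \<le> b l\<close>; the \<open>\<eta>\<close>-families needed from \<open>R_1\<close> and \<open>R_2\<close> are of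
  this form.\<close>

definition ymsgs :: "(nat \<Rightarrow> nat) \<Rightarrow> nat set \<Rightarrow> msg set" where
  "ymsgs b S = (\<Union>l\<in>S. Ymsg l ` {1..b l})"

lemma ymsgs_iff: "y \<in> ymsgs b S \<longleftrightarrow> (\<exists>l q. y = Ymsg l q \<and> l \<in> S \<and> q \<in> {1..b l})"
  unfolding ymsgs_def by blast

lemma finite_ymsgs: "finite S \<Longrightarrow> finite (ymsgs b S)"
  unfolding ymsgs_def by auto

lemma card_ymsgs: "finite S \<Longrightarrow> card (ymsgs b S) = (\<Sum>l\<in>S. b l)"
  unfolding ymsgs_def by (subst card_UN_disjoint) (auto simp: card_image inj_on_def)

lemma ymsgs_mono: "S \<subseteq> T \<Longrightarrow> (\<And>l. l \<in> S \<Longrightarrow> b l \<le> b' l) \<Longrightarrow> ymsgs b S \<subseteq> ymsgs b' T"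
  unfolding ymsgs_def by fastforce

lemma ymsgs_subset_Yset:
  "S \<subseteq> {1..r} \<Longrightarrow> (\<And>l. l \<in> S \<Longrightarrow> b l \<le> \<rho> {l}) \<Longrightarrow> ymsgs b S \<subseteq> Yset r \<rho>"
  unfolding ymsgs_def Yset_def zeta_def by fastforce

lemma ymsgs_supp: "b \<in> nvecs r \<Longrightarrow> ymsgs b (supp r b) = ymsgs b {1..r}"
  unfolding ymsgs_def supp_def by auto

lemma rank_le_card_Yset:
  assumes rank: "is_rank_function r \<rho>"
  shows "\<rho> {1..r} \<le> card (Yset r \<rho>)"
proof -
  obtain b where b: "b \<in> dpolymatroid r \<rho>" "(\<Sum>i\<in>{1..r}. b i) = \<rho> {1..r}"
    using ex_dpolymatroid_tight[OF rank, of "{1..r}"] by auto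
  have "ymsgs b {1..r} \<subseteq> Yset r \<rho>"
    using ymsgs_subset_Yset dpolymatroid_le_rank_singleton[OF b(1)] by blast
  then have "card (ymsgs b {1..r}) \<le> card (Yset r \<rho>)" by (rule card_mono[OF finite_Yset])
  then show ?thesis using card_ymsgs[of "{1..r}" b] b(2) by simp
qed

lemma R1_receiver:
  assumes b: "b \<in> basis_vectors r \<rho>" and j: "j \<in> {1..\<rho> {1..r}}"
  shows "(Xmsg j, Knows (ymsgs b {1..r})) \<in> Rset r \<rho>"
proof -
  have b_dp: "b \<in> dpolymatroid r \<rho>" using b unfolding basis_vectors_def by blast
  define \<eta> where "\<eta> l = Ymsg l ` {1..b l}" for l
  have "\<forall>l \<in> supp r b. \<eta> l \<subseteq> zeta \<rho> l \<and> card (\<eta> l) = b l"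
    using dpolymatroid_le_rank_singleton[OF b_dp]
    unfolding \<eta>_def zeta_def supp_def by (fastforce simp: card_image inj_on_def)
  moreover have "ymsgs b {1..r} = (\<Union>l\<in>supp r b. \<eta> l)"
    using ymsgs_supp[OF dpolymatroid_nvecs[OF b_dp]] unfolding ymsgs_def \<eta>_def by simp
  ultimately have "(Xmsg j, Knows (ymsgs b {1..r})) \<in> S1 r \<rho> b"
    using j unfolding S1_def by blast
  then show ?thesis using b unfolding Rset_def R1_def by blast
qed

lemma R2_receiver:
  assumes c: "c \<in> min_excluded_vectors r \<rho>" and j: "j \<in> supp r c"
    and p: "p \<in> {1..\<rho> {j}}" "c j \<le> p"
  shows "(Ymsg j p, KnowsSum (ymsgs (c(j := c j - 1)) (supp r c))) \<in> Rset r \<rho>"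
proof -
  have c_le: "c l \<le> \<rho> {l}" if "l \<in> supp r c" for l
    using c that unfolding min_excluded_vectors_def excluded_vectors_def supp_def by auto
  define \<eta> where "\<eta> l = Ymsg l ` {1..c l}" for l
  define \<Gamma>2 where "\<Gamma>2 = Ymsg j ` {1..c j - 1}"
  have "\<forall>l \<in> supp r c - {j}. \<eta> l \<subseteq> zeta \<rho> l \<and> card (\<eta> l) = c l"
    using c_le unfolding \<eta>_def zeta_def by (fastforce simp: card_image inj_on_def)
  moreover have "\<Gamma>2 \<subseteq> zeta \<rho> j - {Ymsg j p}" "card \<Gamma>2 = c j - 1"
    using c_le[OF j] p unfolding \<Gamma>2_def zeta_def by (auto simp: card_image inj_on_def)
  moreover have "ymsgs (c(j := c j - 1)) (supp r c) = (\<Union>l\<in>supp r c - {j}. \<eta> l) \<union> \<Gamma>2"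
    using j unfolding ymsgs_def \<eta>_def \<Gamma>2_def by (auto split: if_splits)
  ultimately have "(Ymsg j p, KnowsSum (ymsgs (c(j := c j - 1)) (supp r c))) \<in> S2 r \<rho> c j p"
    unfolding S2_def by blast
  then show ?thesis using c j p(1) unfolding Rset_def R2_def by blast
qed

lemma R3_receiver: "y \<in> Yset r \<rho> \<Longrightarrow> (y, Knows (Xset (\<rho> {1..r}))) \<in> Rset r \<rho>"
  unfolding Rset_def R3_def Yset_def zeta_def by auto

lemma receiver_cases:
  assumes "q \<in> Rset r \<rho>"
  shows "(\<exists>j A. q = (Xmsg j, Knows A) \<and> j \<in> {1..\<rho> {1..r}} \<and> A \<subseteq> Yset r \<rho>) \<or>
    (fst q \<in> Yset r \<rho> \<and> snd q \<in> range KnowsSum \<union> {Knows (Xset (\<rho> {1..r}))})"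
  using assms unfolding Rset_def
proof (elim UnE)
  assume "q \<in> R1 r \<rho>"
  then obtain b j \<eta> where q: "q = (Xmsg j, Knows (\<Union>l\<in>supp r b. \<eta> l))" "j \<in> {1..\<rho> {1..r}}"
      "\<forall>l \<in> supp r b. \<eta> l \<subseteq> zeta \<rho> l"
    unfolding R1_def S1_def by blast
  moreover have "(\<Union>l\<in>supp r b. \<eta> l) \<subseteq> Yset r \<rho>"
    using q(3) unfolding Yset_def supp_def by blast
  ultimately show ?thesis by blast
next
  assume "q \<in> R2 r \<rho>"
  then obtain c j p G where "q = (Ymsg j p, KnowsSum G)" "j \<in> supp r c" "p \<in> {1..\<rho> {j}}"
    unfolding R2_def S2_def by blast
  then show ?thesis using Ymsg_in_Yset[of j p r \<rho>] unfolding supp_def by auto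
next
  assume "q \<in> R3 r \<rho>"
  then show ?thesis unfolding R3_def Ymsg_in_Yset[symmetric] by auto
qed

text \<open>Receivers sharing a Has-set demand distinct messages, all from \<open>X\<close> or all from \<open>Y\<close>.\<close>

lemma card_receivers_with_hasset_le:
  assumes rank: "is_rank_function r \<rho>"
  shows "card {q \<in> Rset r \<rho>. snd q = h} \<le> card (Yset r \<rho>)"
proof -
  define Q where "Q = {q \<in> Rset r \<rho>. snd q = h}"
  define k where "k = \<rho> {1..r}"
  have inj: "inj_on fst Q" unfolding Q_def inj_on_def by (auto simp: prod_eq_iff)
  have "fst ` Q \<subseteq> Xset k \<or> fst ` Q \<subseteq> Yset r \<rho>"
  proof (cases "\<exists>j A. (Xmsg j, Knows A) \<in> Q \<and> j \<in> {1..k} \<and> A \<subseteq> Yset r \<rho>")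
    case True
    then obtain j A where jA: "(Xmsg j, Knows A) \<in> Q" "j \<in> {1..k}" "A \<subseteq> Yset r \<rho>" by blast
    have "A \<noteq> Xset k" using jA Xmsg_notin_Yset unfolding Xset_def by blast
    then have "fst q \<in> Xset k" if "q \<in> Q" for q
      using receiver_cases[of q r \<rho>] that jA(1) unfolding Q_def k_def Xset_def by auto
    then show ?thesis by blast
  next
    case False
    then have "fst q \<in> Yset r \<rho>" if "q \<in> Q" for q
      using receiver_cases[of q r \<rho>] that unfolding Q_def k_def by auto
    then show ?thesis by blast
  qed
  moreover have "card (Xset k) \<le> card (Yset r \<rho>)"
    using card_Xset rank_le_card_Yset[OF rank] unfolding k_def by simp
  moreover have "finite (Xset k)" unfolding Xset_def by auto
  ultimately have "card (fst ` Q) \<le> card (Yset r \<rho>)"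
    using finite_Yset by (meson card_mono order_trans)
  then show ?thesis using card_image[OF inj] unfolding Q_def by simp
qed

lemma mu_le_card_Yset:
  assumes rank: "is_rank_function r \<rho>" and Y: "Yset r \<rho> \<noteq> {}"
  shows "mu (Rset r \<rho>) \<le> card (Yset r \<rho>)"
proof -
  define G where "G = {card {q \<in> Rset r \<rho>. snd q = h} | h. h \<in> snd ` Rset r \<rho>}"
  have G_le: "G \<subseteq> {..card (Yset r \<rho>)}"
    unfolding G_def using card_receivers_with_hasset_le[OF rank] by auto
  obtain y where "y \<in> Yset r \<rho>" using Y by blast
  then have "G \<noteq> {}" unfolding G_def using R3_receiver by force
  then have "Max G \<le> card (Yset r \<rho>)"
    using G_le finite_subset[OF G_le] by (intro Max.boundedI) auto
  then show ?thesis unfolding mu_def G_def by simp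
qed

section \<open>Perfect linear index codes\<close>

definition unit_asg :: "msg \<Rightarrow> nat \<Rightarrow> msg \<Rightarrow> nat \<Rightarrow> bit" where
  "unit_asg z0 t0 = (\<lambda>z t. if z = z0 \<and> t = t0 then 1 else 0)"

lemma unit_asg_in_assignments: "z \<in> Z \<Longrightarrow> t < n \<Longrightarrow> unit_asg z t \<in> assignments n Z"
  unfolding assignments_def bvecs_def unit_asg_def by auto

lemma div_mod_eq_iff:
  fixes i n :: nat assumes "s < n" shows "i div n = j \<and> i mod n = s \<longleftrightarrow> i = j * n + s"
proof
  assume "i div n = j \<and> i mod n = s"
  then show "i = j * n + s" using div_mult_mod_eq[of i n] by simp
next
  assume "i = j * n + s"
  then show "i div n = j \<and> i mod n = s" using assms by simp
qed

locale perfect_linear_index_code =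
  fixes r n :: nat and \<rho> :: "nat set \<Rightarrow> nat" and l :: nat
    and f :: "(msg \<Rightarrow> nat \<Rightarrow> bit) \<Rightarrow> nat \<Rightarrow> bit"
  assumes rank: "is_rank_function r \<rho>" and n_pos: "n > 0"
    and index_code: "is_index_code n (Zset r \<rho>) (Rset r \<rho>) l f"
    and linear: "is_linear_code n (Zset r \<rho>) f"
    and perfect: "real l / real n = real (mu (Rset r \<rho>))"
begin

abbreviation "k \<equiv> \<rho> {1..r}"
abbreviation "Y \<equiv> Yset r \<rho>"
abbreviation "asg \<equiv> assignments n (Zset r \<rho>)"

definition kernel :: "(msg \<Rightarrow> nat \<Rightarrow> bit) set" where
  "kernel = {m \<in> asg. f m = 0}"

lemma asg_add: "m1 \<in> asg \<Longrightarrow> m2 \<in> asg \<Longrightarrow> m1 + m2 \<in> asg"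
  unfolding assignments_def bvecs_def by auto

lemma asg_zero: "0 \<in> asg"
  unfolding assignments_def bvecs_def by auto

lemma asg_scale: "m \<in> asg \<Longrightarrow> (\<lambda>z. bscale c (m z)) \<in> asg"
  unfolding assignments_def bvecs_def bscale_def by auto

lemma asg_vanishes: "m \<in> asg \<Longrightarrow> z \<notin> Zset r \<rho> \<or> s \<ge> n \<Longrightarrow> m z s = 0"
  unfolding assignments_def bvecs_def by auto

lemma code_add: "m1 \<in> asg \<Longrightarrow> m2 \<in> asg \<Longrightarrow> f (m1 + m2) = f m1 + f m2"
  using linear unfolding is_linear_code_def by blast

lemma code_scale: "m \<in> asg \<Longrightarrow> f (\<lambda>z. bscale c (m z)) = bscale c (f m)"
  using linear unfolding is_linear_code_def by blast

lemma code_zero: "f 0 = 0"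
  using code_add[OF asg_zero asg_zero] by simp

lemma code_range: "m \<in> asg \<Longrightarrow> f m \<in> bvecs l"
  using index_code unfolding is_index_code_def by blast

lemma code_sum:
  "finite I \<Longrightarrow> (\<And>i. i \<in> I \<Longrightarrow> M i \<in> asg) \<Longrightarrow>
    (\<Sum>i\<in>I. M i) \<in> asg \<and> f (\<Sum>i\<in>I. M i) = (\<Sum>i\<in>I. f (M i))"
proof (induction I rule: finite_induct)
  case empty
  show ?case using asg_zero code_zero unfolding sum.empty by blast
next
  case (insert x F)
  have "M x \<in> asg" using insert.prems by simp
  moreover have "(\<Sum>i\<in>F. M i) \<in> asg" "f (\<Sum>i\<in>F. M i) = (\<Sum>i\<in>F. f (M i))" using insert by auto
  ultimately show ?case
    unfolding sum.insert[OF insert.hyps] using asg_add code_add by metis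
qed

lemma kernel_decode:
  assumes "(d, h) \<in> Rset r \<rho>" and m: "m \<in> kernel" and "side_info h m = 0"
  shows "m d = 0"
proof -
  obtain g where g: "\<forall>m \<in> asg. g (side_info h m) (f m) = m d"
    using index_code assms(1) unfolding is_index_code_def by blast
  have "g (side_info h m) (f m) = m d" using g m unfolding kernel_def by blast
  moreover have "g (side_info h 0) (f 0) = (0::msg \<Rightarrow> nat \<Rightarrow> bit) d" using g asg_zero by blast
  moreover have "side_info h 0 = 0" by (cases h) (auto simp: fun_eq_iff)
  ultimately show ?thesis using m assms(3) code_zero unfolding kernel_def by simp
qed

lemma kernel_vanishes_on_Yset:
  assumes "m \<in> kernel" "\<And>j. m (Xmsg j) = 0" "y \<in> Y"
  shows "m y = 0"
proof -
  have "side_info (Knows (Xset k)) m = 0" using assms(2) unfolding Xset_def by (auto simp: fun_eq_iff)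
  then show ?thesis using kernel_decode[OF R3_receiver[OF assms(3)] assms(1)] by simp
qed

lemma code_length_le: "0 < k \<Longrightarrow> l \<le> n * card Y"
proof -
  assume "0 < k"
  then have "Y \<noteq> {}" using rank_le_card_Yset[OF rank] by auto
  have "real l = real n * real (mu (Rset r \<rho>))" using perfect n_pos by (simp add: field_simps)
  then have "l = n * mu (Rset r \<rho>)" by (metis of_nat_eq_iff of_nat_mult)
  then show ?thesis using mu_le_card_Yset[OF rank \<open>Y \<noteq> {}\<close>] by simp
qed

abbreviation "Ycoords \<equiv> Y \<times> {..<n}"

definition code_unit :: "msg \<times> nat \<Rightarrow> nat \<Rightarrow> bit" where
  "code_unit p = f (unit_asg (fst p) (snd p))"

definition Yasg :: "(msg \<times> nat \<Rightarrow> bit) \<Rightarrow> msg \<Rightarrow> nat \<Rightarrow> bit" where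
  "Yasg c = (\<Sum>p\<in>Ycoords. (\<lambda>z. bscale (c p) (unit_asg (fst p) (snd p) z)))"

lemma unit_asg_in_asg: "p \<in> Ycoords \<Longrightarrow> unit_asg (fst p) (snd p) \<in> asg"
  using Yset_subset_Zset[of r \<rho>] by (intro unit_asg_in_assignments) auto

lemma Yasg: "Yasg c \<in> asg \<and> f (Yasg c) = (\<Sum>p\<in>Ycoords. bscale (c p) (code_unit p))"
proof -
  have "(\<Sum>p\<in>Ycoords. f (\<lambda>z. bscale (c p) (unit_asg (fst p) (snd p) z))) =
      (\<Sum>p\<in>Ycoords. bscale (c p) (code_unit p))"
    unfolding code_unit_def using unit_asg_in_asg code_scale by (intro sum.cong) auto
  then show ?thesis
    using code_sum[of Ycoords, OF _ asg_scale[OF unit_asg_in_asg]] finite_Yset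
    unfolding Yasg_def by simp
qed

lemma Yasg_apply: "Yasg c z s = (if (z, s) \<in> Ycoords then c (z, s) else 0)"
proof -
  have "Yasg c z s = (\<Sum>p\<in>Ycoords. if p = (z, s) then c p else 0)"
    unfolding Yasg_def sum_apply bscale_def unit_asg_def by (intro sum.cong) auto
  then show ?thesis using finite_Yset by (simp add: sum.delta')
qed

text \<open>The decoding of the receivers in \<open>R_3\<close> makes \<open>f\<close> injective on the assignments supported
  on \<open>Y\<close>.\<close>

lemma code_unit_coeffs_zero:
  assumes "(\<Sum>p\<in>Ycoords. bscale (c p) (code_unit p)) = 0" and p: "p \<in> Ycoords"
  shows "c p = 0"
proof -
  have "Yasg c \<in> kernel" using Yasg assms(1) unfolding kernel_def by simp
  moreover have "Yasg c (Xmsg j) = 0" for j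
    using Xmsg_notin_Yset by (auto simp: fun_eq_iff Yasg_apply)
  ultimately have "Yasg c (fst p) = 0" using kernel_vanishes_on_Yset p by auto
  then have "Yasg c (fst p) (snd p) = 0" by simp
  then show ?thesis using p by (simp add: Yasg_apply)
qed

lemma inj_on_code_unit: "inj_on code_unit Ycoords"
proof
  fix p q assume p: "p \<in> Ycoords" and q: "q \<in> Ycoords" and eq: "code_unit p = code_unit q"
  show "p = q"
  proof (rule ccontr)
    assume "p \<noteq> q"
    define c where "c x = (if x \<in> {p, q} then (1::bit) else 0)" for x
    have "(\<Sum>x\<in>Ycoords. bscale (c x) (code_unit x)) =
        (\<Sum>x\<in>Ycoords. if x \<in> {p, q} then code_unit x else 0)"
      by (intro sum.cong) (auto simp: c_def bscale_def fun_eq_iff)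
    also have "\<dots> = (\<Sum>x\<in>Ycoords \<inter> {p, q}. code_unit x)"
      using finite_Yset by (simp add: sum.inter_restrict)
    also have "Ycoords \<inter> {p, q} = {p, q}" using p q by auto
    also have "(\<Sum>x\<in>{p, q}. code_unit x) = code_unit q + code_unit q" using \<open>p \<noteq> q\<close> eq by simp
    also have "\<dots> = 0" by (rule fun_bit_add_self)
    finally have "c p = 0" using code_unit_coeffs_zero p by blast
    then show False unfolding c_def by simp
  qed
qed

lemma independent_code_units: "fv.independent (code_unit ` Ycoords)"
proof (rule fv.independent_if_scalars_zero)
  fix g :: "(nat \<Rightarrow> bit) \<Rightarrow> bit" and v
  assume zero: "(\<Sum>v\<in>code_unit ` Ycoords. bscale (g v) v) = 0" and v: "v \<in> code_unit ` Ycoords"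
  have "(\<Sum>p\<in>Ycoords. bscale ((g \<circ> code_unit) p) (code_unit p)) = 0"
    using zero by (simp add: sum.reindex[OF inj_on_code_unit])
  then show "g v = 0" using code_unit_coeffs_zero v by fastforce
qed (simp add: finite_Yset)

text \<open>Perfectness: \<open>l \<le> n |Y|\<close>, so the \<open>n |Y|\<close> independent code units span \<open>F_2^l\<close>.\<close>

lemma bvecs_subset_span_code_units:
  assumes "0 < k" shows "bvecs l \<subseteq> fv.span (code_unit ` Ycoords)"
proof (rule fv.subset_span_if_independent_card_ge
    [OF _ bvecs_subset_span_unit_vecs _ independent_code_units])
  show "code_unit ` Ycoords \<subseteq> bvecs l"
    unfolding code_unit_def using code_range unit_asg_in_asg by auto
  have "card (unit_vec ` {..<l}) \<le> n * card Y"
    using card_image_le[of "{..<l}" unit_vec] code_length_le[OF assms] by simp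
  then show "card (unit_vec ` {..<l}) \<le> card (code_unit ` Ycoords)"
    by (simp add: card_image[OF inj_on_code_unit] card_cartesian_product mult.commute)
qed simp

lemma ex_Yasg_code_eq:
  assumes "0 < k" "w \<in> bvecs l"
  shows "\<exists>c. f (Yasg c) = w"
proof -
  obtain u where "w = (\<Sum>v\<in>code_unit ` Ycoords. bscale (u v) v)"
    using bvecs_subset_span_code_units assms fv.span_finite[of "code_unit ` Ycoords"] finite_Yset
    by blast
  then have "w = f (Yasg (u \<circ> code_unit))"
    using Yasg by (simp add: sum.reindex[OF inj_on_code_unit])
  then show ?thesis by blast
qed

text \<open>Coordinate \<open>j * n + s\<close> of \<open>F_2^{kn}\<close> stands for bit \<open>s\<close> of the message \<open>x_j\<close>.\<close>

abbreviation "Xcoords \<equiv> {n..<Suc k * n}"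

lemma Xcoord_iff: "s < n \<Longrightarrow> j * n + s \<in> Xcoords \<longleftrightarrow> j \<in> {1..k}"
proof -
  assume s: "s < n"
  have "n \<le> j * n + s \<longleftrightarrow> 1 \<le> j" using s by (cases j) auto
  moreover have "j * n + s < Suc k * n \<longleftrightarrow> j \<le> k"
  proof
    assume "j * n + s < Suc k * n"
    then have "j * n < Suc k * n" by linarith
    then show "j \<le> k" unfolding mult_less_cancel2 by simp
  next
    assume "j \<le> k"
    then have "j * n + s < j * n + n" "j * n + n \<le> Suc k * n" using s by (auto intro: mult_le_mono1)
    then show "j * n + s < Suc k * n" by linarith
  qed
  ultimately show ?thesis by auto
qed

lemma Xcoord_decode: "i \<in> Xcoords \<Longrightarrow> i div n \<in> {1..k} \<and> i mod n < n"
  using Xcoord_iff[of "i mod n" "i div n"] n_pos by (simp add: mult.commute)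

text \<open>A kernel element with unit \<open>X\<close>-part exists because \<open>f\<close> is onto already on the \<open>Y\<close>-supported
  assignments: add one with the same codeword as the unit assignment at \<open>i\<close>.\<close>

definition kernel_unit :: "nat \<Rightarrow> msg \<Rightarrow> nat \<Rightarrow> bit" where
  "kernel_unit i = (SOME m. m \<in> kernel \<and>
     (\<forall>j s. m (Xmsg j) s = (if s < n \<and> j * n + s = i then 1 else 0)))"

lemma kernel_unit:
  assumes i: "i \<in> Xcoords"
  shows "kernel_unit i \<in> kernel \<and>
    (\<forall>j s. kernel_unit i (Xmsg j) s = (if s < n \<and> j * n + s = i then 1 else 0))"
proof -
  define u where "u = unit_asg (Xmsg (i div n)) (i mod n)"
  have u: "u \<in> asg" unfolding u_def using Xcoord_decode[OF i] Xmsg_in_Zset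
    by (intro unit_asg_in_assignments) auto
  have "0 < k" using Xcoord_decode[OF i] by auto
  then obtain c where c: "f (Yasg c) = f u" using ex_Yasg_code_eq code_range[OF u] by blast
  have "u + Yasg c \<in> kernel" using asg_add[OF u] code_add[OF u] Yasg c unfolding kernel_def by simp
  moreover have "(u + Yasg c) (Xmsg j) s = (if s < n \<and> j * n + s = i then 1 else 0)" for j s
    using Xmsg_notin_Yset div_mod_eq_iff[of s n i j] n_pos
    by (auto simp: u_def unit_asg_def Yasg_apply)
  ultimately have "\<exists>m. m \<in> kernel \<and> (\<forall>j s. m (Xmsg j) s = (if s < n \<and> j * n + s = i then 1 else 0))"
    by blast
  then show ?thesis unfolding kernel_unit_def by (rule someI_ex)
qed

text \<open>\<open>lift x\<close> is a kernel element with \<open>X\<close>-part \<open>x\<close>, and its entry at \<open>(y, s)\<close> is the inner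
  product of \<open>x\<close> with \<open>row y s\<close>; these rows are the representing vectors.\<close>

definition lift :: "(nat \<Rightarrow> bit) \<Rightarrow> msg \<Rightarrow> nat \<Rightarrow> bit" where
  "lift x = (\<Sum>i\<in>Xcoords. (\<lambda>z. bscale (x i) (kernel_unit i z)))"

definition row :: "msg \<Rightarrow> nat \<Rightarrow> nat \<Rightarrow> bit" where
  "row y s = (\<lambda>i. if i \<in> Xcoords then kernel_unit i y s else 0)"

definition rows :: "msg set \<Rightarrow> (nat \<Rightarrow> bit) set" where
  "rows T = (\<lambda>(y, s). row y s) ` (T \<times> {..<n})"

lemma lift_apply: "lift x y s = bdot Xcoords (row y s) x"
  unfolding lift_def bdot_def row_def sum_apply bscale_def by (simp add: mult.commute)

lemma lift_in_kernel: "lift x \<in> kernel"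
proof -
  have unit: "(\<lambda>z. bscale (x i) (kernel_unit i z)) \<in> asg" "f (\<lambda>z. bscale (x i) (kernel_unit i z)) = 0"
    if "i \<in> Xcoords" for i
    using kernel_unit[OF that] asg_scale code_scale unfolding kernel_def by (auto simp: bscale_def)
  then show ?thesis using code_sum[of Xcoords, OF _ unit(1)] unfolding lift_def kernel_def by simp
qed

lemma lift_Xmsg: "i \<in> Xcoords \<Longrightarrow> lift x (Xmsg (i div n)) (i mod n) = x i"
proof -
  assume i: "i \<in> Xcoords"
  have "lift x (Xmsg (i div n)) (i mod n) = (\<Sum>i'\<in>Xcoords. if i' = i then x i' else 0)"
    unfolding lift_def sum_apply bscale_def
    using kernel_unit n_pos by (intro sum.cong) (auto simp: mult.commute)
  then show ?thesis using i by simp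
qed

lemma lift_vanishes_if_rows_annihilated:
  assumes "\<And>s. s < n \<Longrightarrow> bdot Xcoords (row y s) x = 0"
  shows "lift x y = 0"
proof
  fix s
  show "lift x y s = 0 s"
  proof (cases "s < n")
    case True
    then show ?thesis using assms lift_apply by simp
  next
    case False
    then show ?thesis using asg_vanishes lift_in_kernel unfolding kernel_def by simp
  qed
qed

lemma row_supported_on: "row y s \<in> supported_on Xcoords"
  unfolding row_def supported_on_def by auto

lemma finite_rows: "finite T \<Longrightarrow> finite (rows T)"
  unfolding rows_def by simp

lemma row_in_rows: "y \<in> T \<Longrightarrow> s < n \<Longrightarrow> row y s \<in> rows T"
  unfolding rows_def by auto

lemma unit_vec_in_span_rows_if_decoded:
  assumes recv: "(Xmsg (i div n), Knows E) \<in> Rset r \<rho>" and E: "finite E" and i: "i \<in> Xcoords"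
  shows "unit_vec i \<in> fv.span (rows E)"
proof (rule in_span_if_bdot_annihilated[OF _ finite_rows[OF E]])
  show "rows E \<subseteq> supported_on Xcoords" unfolding rows_def using row_supported_on by auto
  show "unit_vec i \<in> supported_on Xcoords" using i unfolding supported_on_def unit_vec_def by auto
  fix x assume "\<forall>\<phi>\<in>rows E. bdot Xcoords \<phi> x = 0"
  then have "lift x z = 0" if "z \<in> E" for z
    using that row_in_rows by (intro lift_vanishes_if_rows_annihilated) blast
  then have "side_info (Knows E) (lift x) = 0" by (auto simp: fun_eq_iff)
  then have "lift x (Xmsg (i div n)) = 0" using kernel_decode[OF recv lift_in_kernel] by blast
  then have "x i = 0" using lift_Xmsg[OF i, of x] by simp
  then show "bdot Xcoords (unit_vec i) x = 0" using bdot_unit_vec_left[OF _ i] by simp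
qed simp

lemma row_in_span_sum_rows_if_decoded:
  assumes recv: "(y, KnowsSum G) \<in> Rset r \<rho>" and s: "s < n"
  shows "row y s \<in> fv.span ((\<lambda>t. \<Sum>z\<in>G. row z t) ` {..<n})"
proof (rule in_span_if_bdot_annihilated)
  show "(\<lambda>t. \<Sum>z\<in>G. row z t) ` {..<n} \<subseteq> supported_on Xcoords"
    unfolding supported_on_def row_def sum_apply by auto
  show "row y s \<in> supported_on Xcoords" by (rule row_supported_on)
  fix x assume annihilated: "\<forall>\<phi>\<in>(\<lambda>t. \<Sum>z\<in>G. row z t) ` {..<n}. bdot Xcoords \<phi> x = 0"
  have "(\<Sum>z\<in>G. lift x z) = 0"
  proof
    fix t
    show "(\<Sum>z\<in>G. lift x z) t = 0 t"
    proof (cases "t < n")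
      case True
      have "(\<Sum>z\<in>G. lift x z) t = bdot Xcoords (\<Sum>z\<in>G. row z t) x"
        unfolding sum_apply lift_apply bdot_sum_left ..
      then show ?thesis using annihilated True by simp
    next
      case False
      then have "lift x z t = 0" for z
        using asg_vanishes[of "lift x" z t] lift_in_kernel unfolding kernel_def by simp
      then show ?thesis unfolding sum_apply by simp
    qed
  qed
  then have "side_info (KnowsSum G) (lift x) = 0" by (simp add: fun_eq_iff)
  then have "lift x y = 0" by (rule kernel_decode[OF recv lift_in_kernel])
  then show "bdot Xcoords (row y s) x = 0" using lift_apply by (metis zero_fun_apply)
qed simp_all

lemma unit_vec_in_span_rows_basis:
  assumes b: "b \<in> dpolymatroid r \<rho>" "(\<Sum>i\<in>{1..r}. b i) = k" and i: "i \<in> Xcoords"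
  shows "unit_vec i \<in> fv.span (rows (ymsgs b {1..r}))"
  using R1_receiver[OF basis_vectorI[OF b]] Xcoord_decode[OF i]
  by (intro unit_vec_in_span_rows_if_decoded[OF _ finite_ymsgs i]) auto

lemma row_in_span_rows_tight:
  assumes b: "b \<in> dpolymatroid r \<rho>" and S: "S \<subseteq> {1..r}" and tight: "(\<Sum>i\<in>S. b i) = \<rho> S"
    and j: "j \<in> S" and p: "p \<in> {1..\<rho> {j}}" and s: "s < n"
  shows "row (Ymsg j p) s \<in> fv.span (rows (ymsgs b S))"
proof (cases "p \<le> b j")
  case True
  then have "Ymsg j p \<in> ymsgs b S" using j p unfolding ymsgs_iff by auto
  then show ?thesis using s by (intro fv.span_base row_in_rows)
next
  case False
  then obtain c where c: "c \<in> min_excluded_vectors r \<rho>" "c j = b j + 1" "supp r c \<subseteq> S"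
      "\<forall>i\<in>S - {j}. c i \<le> b i"
    using ex_min_excluded_vector_raising[OF b S tight j] p by auto
  define G where "G = ymsgs (c(j := c j - 1)) (supp r c)"
  have "j \<in> supp r c" using c(2) j S unfolding supp_def by auto
  then have "(Ymsg j p, KnowsSum G) \<in> Rset r \<rho>"
    using R2_receiver[OF c(1) _ p] c(2) False unfolding G_def by simp
  then have "row (Ymsg j p) s \<in> fv.span ((\<lambda>t. \<Sum>z\<in>G. row z t) ` {..<n})"
    using s by (rule row_in_span_sum_rows_if_decoded)
  moreover have "G \<subseteq> ymsgs b S" unfolding G_def using c by (intro ymsgs_mono) auto
  then have "(\<Sum>z\<in>G. row z t) \<in> fv.span (rows (ymsgs b S))" if "t < n" for t
    using that by (intro fv.span_sum fv.span_base row_in_rows) auto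
  then have "(\<lambda>t. \<Sum>z\<in>G. row z t) ` {..<n} \<subseteq> fv.span (rows (ymsgs b S))" by auto
  ultimately show ?thesis using fv.span_minimal[OF _ fv.subspace_span] by blast
qed

text \<open>The rows of a basis set span all of \<open>F_2^{kn}\<close> and there are at most \<open>kn\<close> of them, so
  they are independent and pairwise distinct.\<close>

lemma independent_rows_basis:
  assumes b: "b \<in> dpolymatroid r \<rho>" "(\<Sum>i\<in>{1..r}. b i) = k"
  shows "fv.independent (rows (ymsgs b {1..r})) \<and> inj_on (\<lambda>(y, s). row y s) (ymsgs b {1..r} \<times> {..<n})"
proof -
  let ?E = "ymsgs b {1..r}"
  have fin: "finite (rows ?E)" by (simp add: finite_rows finite_ymsgs)
  have span: "unit_vec ` Xcoords \<subseteq> fv.span (rows ?E)" using unit_vec_in_span_rows_basis[OF b] by blast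
  have card_units: "card (unit_vec ` Xcoords) = card (?E \<times> {..<n})"
    using card_ymsgs[of "{1..r}" b] b(2)
    by (simp add: card_image inj_on_subset[OF inj_unit_vec] card_cartesian_product)
  have card_rows: "card (rows ?E) \<le> card (?E \<times> {..<n})"
    unfolding rows_def by (rule card_image_le) (simp add: finite_ymsgs)
  have "fv.independent (rows ?E)"
    using fv.independent_if_card_le_independent_in_span[OF fin independent_unit_vecs span]
      card_units card_rows
    by simp
  moreover have "card (?E \<times> {..<n}) \<le> card (rows ?E)"
    using fv.independent_span_bound[OF fin independent_unit_vecs span] card_units by simp
  then have "inj_on (\<lambda>(y, s). row y s) (?E \<times> {..<n})"
    using card_rows unfolding rows_def by (intro eq_card_imp_inj_on) (auto simp: finite_ymsgs)
  ultimately show ?thesis by blast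
qed

lemma dim_span_rows:
  assumes S: "S \<subseteq> {1..r}"
  shows "fv.dim (\<Union>i\<in>S. fv.span (rows (zeta \<rho> i))) = n * \<rho> S"
proof -
  obtain b where b: "b \<in> dpolymatroid r \<rho>" "(\<Sum>i\<in>S. b i) = \<rho> S" "(\<Sum>i\<in>{1..r}. b i) = k"
    using ex_dpolymatroid_tight[OF rank S] by blast
  have b_le: "b i \<le> \<rho> {i}" if "i \<in> S" for i
    using dpolymatroid_le_rank_singleton[OF b(1)] that S by auto
  let ?ES = "ymsgs b S"
  have sub: "?ES \<subseteq> ymsgs b {1..r}" using S by (rule ymsgs_mono) simp
  note basis = independent_rows_basis[OF b(1,3)]
  have "rows ?ES \<subseteq> rows (ymsgs b {1..r})" using sub unfolding rows_def by auto
  then have indep: "fv.independent (rows ?ES)" using basis fv.independent_mono by blast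
  have "card (rows ?ES) = card (?ES \<times> {..<n})"
    using basis sub unfolding rows_def by (intro card_image) (auto elim: inj_on_subset)
  then have card: "card (rows ?ES) = n * \<rho> S"
    using card_ymsgs[of S b] finite_subset[OF S] b(2) by (simp add: card_cartesian_product)
  have "rows ?ES \<subseteq> (\<Union>i\<in>S. fv.span (rows (zeta \<rho> i)))"
  proof
    fix v assume "v \<in> rows ?ES"
    then obtain y s where "v = row y s" "y \<in> ?ES" "s < n" unfolding rows_def by auto
    then obtain i q where "v = row (Ymsg i q) s" "i \<in> S" "q \<in> {1..b i}" "s < n"
      unfolding ymsgs_iff by blast
    moreover have "Ymsg i q \<in> zeta \<rho> i" using calculation b_le unfolding zeta_def by fastforce
    ultimately show "v \<in> (\<Union>i\<in>S. fv.span (rows (zeta \<rho> i)))" by (blast intro: fv.span_base row_in_rows)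
  qed
  moreover have "(\<Union>i\<in>S. fv.span (rows (zeta \<rho> i))) \<subseteq> fv.span (rows ?ES)"
  proof (intro UN_least fv.span_minimal[OF _ fv.subspace_span] subsetI)
    fix i v assume "i \<in> S" "v \<in> rows (zeta \<rho> i)"
    then obtain p s where "v = row (Ymsg i p) s" "p \<in> {1..\<rho> {i}}" "s < n"
      unfolding rows_def zeta_def by auto
    then show "v \<in> fv.span (rows ?ES)" using row_in_span_rows_tight[OF b(1) S b(2) \<open>i \<in> S\<close>] by simp
  qed
  ultimately have "fv.span (\<Union>i\<in>S. fv.span (rows (zeta \<rho> i))) = fv.span (rows ?ES)"
    using fv.span_mono fv.span_minimal[OF _ fv.subspace_span] by (metis subset_antisym)
  then show ?thesis using fv.span_eq_dim fv.dim_eq_card_independent[OF indep] card by metis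
qed

lemma representable: "representable_F2 r (\<lambda>S. n * \<rho> S)"
  unfolding representable_F2_def
proof (intro exI conjI ballI allI impI)
  fix i
  show "fv.subspace (fv.span (rows (zeta \<rho> i)))" by (rule fv.subspace_span)
  have "rows (zeta \<rho> i) \<subseteq> bvecs (Suc k * n)" unfolding rows_def row_def bvecs_def by auto
  then show "fv.span (rows (zeta \<rho> i)) \<subseteq> bvecs (Suc k * n)"
    using subspace_bvecs by (rule fv.span_minimal)
next
  fix S :: "nat set" assume "S \<subseteq> {1..r}"
  then show "fv.dim (\<Union>i\<in>S. fv.span (rows (zeta \<rho> i))) = n * \<rho> S" by (rule dim_span_rows)
qed

end

theorem theorem2:
  fixes r n :: nat and \<rho> :: "nat set \<Rightarrow> nat"
  assumes "is_rank_function r \<rho>"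
    and "n > 0"
    and "has_perfect_linear_solution n (Zset r \<rho>) (Rset r \<rho>)"
  shows "representable_F2 r (\<lambda>S. n * \<rho> S)"
proof -
  obtain l f where "is_index_code n (Zset r \<rho>) (Rset r \<rho>) l f" "is_linear_code n (Zset r \<rho>) f"
    "real l / real n = real (mu (Rset r \<rho>))"
    using assms(3) unfolding has_perfect_linear_solution_def by blast
  then interpret perfect_linear_index_code r n \<rho> l f using assms(1,2) by unfold_locales
  show ?thesis by (rule representable)
qed

end
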